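(* Let $n\geq 1$. There exist functions $F\in C^\infty(\mathbb{R}^n)$ and $v\in C^\infty(\mathbb{R}^n)$ such that \[ \sum_{i,j=1}^n D_iv\,D_jv\,D^2_{ij}v\;+\;\sum_{i=1}^n D_iv\,D_iF\;=\;0\quad\text{on }\mathbb{R}^n, \] and open sets $\Omega^+,\Omega^-\subseteq\mathbb{R}^n$ such that \[ \sup_{\Omega^+} v\;>\;\max_{\partial\Omega^+} v \qquad\text{and}\qquad \inf_{\Omega^-} v\;<\;\min_{\partial\Omega^-} v , \] i.e. $v$ satisfies neither the Maximum nor the Minimum Principle.
   Context: $D_i=\partial/\partial x_i$ and $D^2_{ij}=\partial^2/\partial x_i\partial x_j$. The equation is the scalar $\infty$-Laplace equation perturbed by the linear first-order term $Dv\cdot DF$. *)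

theory Defs
  imports "HOL-Analysis.Analysis"
begin

definition pderiv :: "'n::finite \<Rightarrow> (real^'n \<Rightarrow> real) \<Rightarrow> real^'n \<Rightarrow> real" where
  "pderiv i f x = deriv (\<lambda>t. f (x + t *\<^sub>R axis i 1)) 0"

fun iter_pderiv :: "'n::finite list \<Rightarrow> (real^'n \<Rightarrow> real) \<Rightarrow> real^'n \<Rightarrow> real" where
  "iter_pderiv [] f = f"
| "iter_pderiv (i # is) f = pderiv i (iter_pderiv is f)"

definition smooth_Rn :: "(real^'n::finite \<Rightarrow> real) \<Rightarrow> bool" where
  "smooth_Rn f \<longleftrightarrow>
     (\<forall>is. continuous_on UNIV (iter_pderiv is f)) \<and>
     (\<forall>is i x. (\<lambda>t. iter_pderiv is f (x + t *\<^sub>R axis i 1)) differentiable (at 0))"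

end

theory Submission
  imports Defs
begin

text \<open>
  Both functions are radial, \<open>v x = g \<bar>x\<bar>\<^sup>2\<close> and \<open>F x = h \<bar>x\<bar>\<^sup>2\<close>. Writing \<open>u = \<bar>x\<bar>\<^sup>2\<close>,
  the equation collapses to \<open>4 u g'(u) (4 u g'(u) g''(u) + 2 g'(u)\<^sup>2 + h'(u)) = 0\<close>, so any
  profile \<open>g\<close> can be matched by a drift \<open>h\<close> with \<open>h' = -4 u g' g'' - 2 g'\<^sup>2\<close>. Taking
  \<open>g u = u\<^sup>2 - 2 u\<close> gives polynomial, hence smooth, \<open>v\<close> and \<open>F\<close>. Since \<open>g\<close> is not monotone,
  \<open>v\<close> is radially non-monotone: \<open>v 0 = 0\<close> exceeds the value \<open>-1\<close> on the unit sphere, and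
  \<open>v = -1\<close> on the unit sphere lies below the value \<open>0\<close> on the sphere of radius \<open>\<surd>2\<close>.
\<close>

lemma real_polynomial_function_directional_derivative:
  fixes p :: "'a::real_normed_vector \<Rightarrow> real"
  assumes "real_polynomial_function p"
  shows "\<exists>q. real_polynomial_function q \<and>
           (\<forall>x. ((\<lambda>t. p (x + t *\<^sub>R d)) has_real_derivative q x) (at 0))"
  using assms
proof (induction rule: real_polynomial_function.induct)
  case (linear f)
  then have "\<forall>x. ((\<lambda>t. f (x + t *\<^sub>R d)) has_real_derivative f d) (at 0)"
    by (auto intro!: derivative_eq_intros simp: linear_simps)
  then show ?case by blast
next
  case (const c)
  then show ?case by (intro exI[of _ "\<lambda>x. 0"]) auto
next
  case (add f g)
  then obtain f' g' where "real_polynomial_function f'" "real_polynomial_function g'"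
    "\<forall>x. ((\<lambda>t. f (x + t *\<^sub>R d)) has_real_derivative f' x) (at 0)"
    "\<forall>x. ((\<lambda>t. g (x + t *\<^sub>R d)) has_real_derivative g' x) (at 0)" by blast
  then show ?case
    by (intro exI[of _ "\<lambda>x. f' x + g' x"]) (auto intro!: derivative_eq_intros)
next
  case (mult f g)
  then obtain f' g' where "real_polynomial_function f'" "real_polynomial_function g'"
    "\<forall>x. ((\<lambda>t. f (x + t *\<^sub>R d)) has_real_derivative f' x) (at 0)"
    "\<forall>x. ((\<lambda>t. g (x + t *\<^sub>R d)) has_real_derivative g' x) (at 0)" by blast
  then show ?case
    using mult.hyps
    by (intro exI[of _ "\<lambda>x. f' x * g x + f x * g' x"]) (auto intro!: derivative_eq_intros)
qed

lemma real_polynomial_function_pderiv: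
  assumes "real_polynomial_function f"
  shows "real_polynomial_function (pderiv i f)"
    and "(\<lambda>t. f (x + t *\<^sub>R axis i 1)) differentiable (at 0)"
proof -
  obtain q where q: "real_polynomial_function q"
    "\<forall>x. ((\<lambda>t. f (x + t *\<^sub>R axis i 1)) has_real_derivative q x) (at 0)"
    using real_polynomial_function_directional_derivative[OF assms] by blast
  then have "pderiv i f = q"
    unfolding pderiv_def by (auto intro!: DERIV_imp_deriv)
  with q show "real_polynomial_function (pderiv i f)"
    and "(\<lambda>t. f (x + t *\<^sub>R axis i 1)) differentiable (at 0)"
    using real_differentiable_def by auto
qed

lemma real_polynomial_function_iter_pderiv:
  "real_polynomial_function f \<Longrightarrow> real_polynomial_function (iter_pderiv is f)"
  by (induction "is") (auto intro: real_polynomial_function_pderiv)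

lemma smooth_Rn_real_polynomial_function:
  "real_polynomial_function f \<Longrightarrow> smooth_Rn f"
  unfolding smooth_Rn_def
  using real_polynomial_function_iter_pderiv real_polynomial_function_pderiv(2)
    continuous_on_polymonial_function real_polynomial_function_eq
  by metis

lemma real_polynomial_function_radial:
  fixes g :: "real \<Rightarrow> real"
  assumes "real_polynomial_function g"
  shows "real_polynomial_function (\<lambda>x::'a::euclidean_space. g (x \<bullet> x))"
proof -
  have "real_polynomial_function (\<lambda>x::'a. \<Sum>b\<in>Basis. (x \<bullet> b) * (x \<bullet> b))"
    by (intro real_polynomial_function_sum) (auto intro!: bounded_linear_inner_left)
  then have "polynomial_function (\<lambda>x::'a. x \<bullet> x)"
    by (simp add: euclidean_inner[symmetric] real_polynomial_function_eq)
  from real_polynomial_function_compose[OF this assms] show ?thesis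
    by (simp add: o_def)
qed

lemma inner_add_scaleR_axis:
  "(x + t *\<^sub>R axis i 1) \<bullet> (x + t *\<^sub>R axis i 1) = x \<bullet> x + 2 * t * x $ i + t\<^sup>2"
  by (simp add: inner_add_left inner_add_right inner_axis inner_commute
      power2_eq_square algebra_simps)

lemma pderiv_radial_times_component:
  assumes "\<And>u. (\<phi> has_real_derivative \<phi>' u) (at u)"
  shows "pderiv i (\<lambda>x. \<phi> (x \<bullet> x) * x $ j) x
           = 2 * \<phi>' (x \<bullet> x) * x $ i * x $ j + \<phi> (x \<bullet> x) * (if i = j then 1 else 0)"
  unfolding pderiv_def inner_add_scaleR_axis
  by (rule DERIV_imp_deriv)
    (auto intro!: derivative_eq_intros DERIV_chain2[OF assms] simp: axis_def algebra_simps)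

lemma pderiv_radial:
  fixes i :: "'n::finite"
  assumes "\<And>u. (g has_real_derivative g' u) (at u)"
  shows "pderiv i (\<lambda>x. g (x \<bullet> x)) = (\<lambda>x. 2 * g' (x \<bullet> x) * x $ i)"
proof
  fix x :: "real^'n"
  have "((\<lambda>t. x \<bullet> x + 2 * t * x $ i + t\<^sup>2) has_real_derivative 2 * x $ i) (at 0)"
    by (auto intro!: derivative_eq_intros)
  from DERIV_chain2[OF assms this]
  show "pderiv i (\<lambda>x. g (x \<bullet> x)) x = 2 * g' (x \<bullet> x) * x $ i"
    unfolding pderiv_def inner_add_scaleR_axis by (simp add: DERIV_imp_deriv mult_ac)
qed

lemma infinity_laplacian_drift_radial:
  fixes g h :: "real \<Rightarrow> real" and x :: "real^'n::finite"
  assumes g': "\<And>u. (g has_real_derivative g' u) (at u)"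
    and g'': "\<And>u. (g' has_real_derivative g'' u) (at u)"
    and h': "\<And>u. (h has_real_derivative h' u) (at u)"
  defines "v \<equiv> \<lambda>x. g (x \<bullet> x)" and "F \<equiv> \<lambda>x. h (x \<bullet> x)" and "u \<equiv> x \<bullet> x"
  shows "(\<Sum>i\<in>UNIV. \<Sum>j\<in>UNIV. pderiv i v x * pderiv j v x * pderiv i (pderiv j v) x)
           + (\<Sum>i\<in>UNIV. pderiv i v x * pderiv i F x)
         = 4 * u * g' u * (4 * u * g' u * g'' u + 2 * (g' u)\<^sup>2 + h' u)"
proof -
  have Dv: "pderiv i v = (\<lambda>x. 2 * g' (x \<bullet> x) * x $ i)" for i
    unfolding v_def using pderiv_radial[OF g'] .
  have D2v: "pderiv i (pderiv j v) x
               = 4 * g'' u * x $ i * x $ j + 2 * g' u * (if i = j then 1 else 0)" for i j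
  proof -
    have "pderiv j v = (\<lambda>x. (2 * g' (x \<bullet> x)) * x $ j)" by (simp add: Dv)
    moreover have "\<And>u. ((\<lambda>u. 2 * g' u) has_real_derivative 2 * g'' u) (at u)"
      by (auto intro!: derivative_eq_intros g'')
    ultimately show ?thesis
      using pderiv_radial_times_component[of "\<lambda>u. 2 * g' u" "\<lambda>u. 2 * g'' u" i j x]
      by (simp add: u_def)
  qed
  have DF: "pderiv i F x = 2 * h' u * x $ i" for i
    using pderiv_radial[OF h', of i] by (simp add: F_def u_def)
  have u_sum: "u = (\<Sum>i\<in>UNIV. x $ i * x $ i)"
    unfolding u_def inner_vec_def by simp
  have row: "(\<Sum>j\<in>UNIV. pderiv i v x * pderiv j v x * pderiv i (pderiv j v) x)
           = x $ i * x $ i * (16 * (g' u)\<^sup>2 * g'' u * u + 8 * (g' u) ^ 3)" for i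
  proof -
    have "(\<Sum>j\<in>UNIV. pderiv i v x * pderiv j v x * pderiv i (pderiv j v) x)
        = (\<Sum>j\<in>UNIV. 16 * (g' u)\<^sup>2 * g'' u * (x $ i * x $ i) * (x $ j * x $ j)
                     + (if j = i then 8 * (g' u) ^ 3 * (x $ i * x $ i) else 0))"
      unfolding D2v unfolding Dv u_def[symmetric]
      by (intro sum.cong) (auto simp: algebra_simps power2_eq_square power3_eq_cube)
    also have "\<dots> = 16 * (g' u)\<^sup>2 * g'' u * (x $ i * x $ i) * (\<Sum>j\<in>UNIV. x $ j * x $ j)
                     + 8 * (g' u) ^ 3 * (x $ i * x $ i)"
      by (simp add: sum.distrib sum_distrib_left)
    also have "\<dots> = x $ i * x $ i * (16 * (g' u)\<^sup>2 * g'' u * u + 8 * (g' u) ^ 3)"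
      by (simp add: u_sum[symmetric] algebra_simps)
    finally show ?thesis .
  qed
  have "(\<Sum>i\<in>UNIV. \<Sum>j\<in>UNIV. pderiv i v x * pderiv j v x * pderiv i (pderiv j v) x)
           + (\<Sum>i\<in>UNIV. pderiv i v x * pderiv i F x)
        = (\<Sum>i\<in>UNIV. x $ i * x $ i *
             (16 * (g' u)\<^sup>2 * g'' u * u + 8 * (g' u) ^ 3 + 4 * g' u * h' u))"
    unfolding row unfolding Dv DF u_def[symmetric] sum.distrib[symmetric]
    by (intro sum.cong) (auto simp: algebra_simps)
  also have "\<dots> = 4 * u * g' u * (4 * u * g' u * g'' u + 2 * (g' u)\<^sup>2 + h' u)"
    unfolding sum_distrib_right[symmetric] u_sum[symmetric]
    by (simp add: algebra_simps power2_eq_square power3_eq_cube)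
  finally show ?thesis .
qed

lemma radial_image_sphere:
  fixes g :: "real \<Rightarrow> real"
  assumes "0 \<le> r"
  shows "(\<lambda>x::'a::euclidean_space. g (x \<bullet> x)) ` sphere 0 r = {g (r\<^sup>2)}"
proof -
  obtain y :: 'a where "y \<in> sphere 0 r"
    using assms by (metis all_not_in_conv not_less sphere_eq_empty)
  moreover have "g (x \<bullet> x) = g (r\<^sup>2)" if "x \<in> sphere (0::'a) r" for x
    using that by (simp add: power2_norm_eq_inner[symmetric])
  ultimately show ?thesis by auto
qed

lemma bounded_image_continuous:
  fixes f :: "'a::heine_borel \<Rightarrow> 'b::metric_space"
  assumes "continuous_on UNIV f" and "bounded S"
  shows "bounded (f ` S)"
proof -
  have "compact (f ` closure S)"
    using assms by (intro compact_continuous_image) (auto intro: continuous_on_subset)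
  then show ?thesis
    by (meson bounded_subset closure_subset compact_imp_bounded image_mono)
qed

lemma radial_point_in_ball:
  fixes g :: "real \<Rightarrow> real"
  assumes "0 \<le> s" and "s < r"
  obtains y :: "'a::euclidean_space" where "y \<in> ball 0 r" and "g (y \<bullet> y) = g (s\<^sup>2)"
proof -
  have "(\<lambda>x::'a. g (x \<bullet> x)) ` sphere 0 s = {g (s\<^sup>2)}"
    by (rule radial_image_sphere[OF assms(1)])
  then have "g (s\<^sup>2) \<in> (\<lambda>x::'a. g (x \<bullet> x)) ` sphere 0 s"
    by (metis singletonI)
  then obtain y :: 'a where "g (s\<^sup>2) = g (y \<bullet> y)" and "y \<in> sphere 0 s"
    by (rule imageE)
  with assms(2) show ?thesis
    by (intro that[of y]) auto
qed

lemma radial_image_frontier_ball: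
  fixes g :: "real \<Rightarrow> real"
  assumes "0 < r"
  shows "(\<lambda>x::'a::euclidean_space. g (x \<bullet> x)) ` frontier (ball 0 r) = {g (r\<^sup>2)}"
  unfolding frontier_ball[OF assms] using assms by (intro radial_image_sphere) simp

lemma radial_Sup_frontier_ball_less:
  fixes g :: "real \<Rightarrow> real"
  assumes "continuous_on UNIV g" and "0 \<le> s" "s < r" and "g (r\<^sup>2) < g (s\<^sup>2)"
  shows "Sup ((\<lambda>x::'a::euclidean_space. g (x \<bullet> x)) ` frontier (ball 0 r))
           < Sup ((\<lambda>x::'a. g (x \<bullet> x)) ` ball 0 r)"
proof -
  have cont: "continuous_on UNIV (\<lambda>x::'a. g (x \<bullet> x))"
    by (intro continuous_on_compose2[OF assms(1)] continuous_intros) auto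
  obtain y :: 'a where y_in: "y \<in> ball 0 r" and y: "g (y \<bullet> y) = g (s\<^sup>2)"
    using radial_point_in_ball assms(2,3) .
  have bdd: "bdd_above ((\<lambda>x::'a. g (x \<bullet> x)) ` ball 0 r)"
    using bounded_image_continuous[OF cont bounded_ball] by (rule bounded_imp_bdd_above)
  have "g (s\<^sup>2) \<le> Sup ((\<lambda>x::'a. g (x \<bullet> x)) ` ball 0 r)"
    using cSup_upper[OF imageI[OF y_in] bdd] by (simp only: y)
  moreover have "(\<lambda>x::'a. g (x \<bullet> x)) ` frontier (ball 0 r) = {g (r\<^sup>2)}"
    using assms(2,3) by (intro radial_image_frontier_ball) linarith
  ultimately show ?thesis
    using assms(4) by simp
qed

lemma radial_Inf_frontier_ball_greater:
  fixes g :: "real \<Rightarrow> real"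
  assumes "continuous_on UNIV g" and "0 \<le> s" "s < r" and "g (s\<^sup>2) < g (r\<^sup>2)"
  shows "Inf ((\<lambda>x::'a::euclidean_space. g (x \<bullet> x)) ` ball 0 r)
           < Inf ((\<lambda>x::'a. g (x \<bullet> x)) ` frontier (ball 0 r))"
proof -
  have cont: "continuous_on UNIV (\<lambda>x::'a. g (x \<bullet> x))"
    by (intro continuous_on_compose2[OF assms(1)] continuous_intros) auto
  obtain y :: 'a where y_in: "y \<in> ball 0 r" and y: "g (y \<bullet> y) = g (s\<^sup>2)"
    using radial_point_in_ball assms(2,3) .
  have bdd: "bdd_below ((\<lambda>x::'a. g (x \<bullet> x)) ` ball 0 r)"
    using bounded_image_continuous[OF cont bounded_ball] by (rule bounded_imp_bdd_below)
  have "Inf ((\<lambda>x::'a. g (x \<bullet> x)) ` ball 0 r) \<le> g (s\<^sup>2)"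
    using cInf_lower[OF imageI[OF y_in] bdd] by (simp only: y)
  moreover have "(\<lambda>x::'a. g (x \<bullet> x)) ` frontier (ball 0 r) = {g (r\<^sup>2)}"
    using assms(2,3) by (intro radial_image_frontier_ball) linarith
  ultimately show ?thesis
    using assms(4) by simp
qed

definition v_profile :: "real \<Rightarrow> real" where
  "v_profile u = u\<^sup>2 - 2 * u"

definition F_profile :: "real \<Rightarrow> real" where
  "F_profile u = - 8 * u * (u - 1)\<^sup>2"

lemma real_polynomial_function_profiles:
  "real_polynomial_function v_profile" "real_polynomial_function F_profile"
  unfolding v_profile_def[abs_def] F_profile_def[abs_def]
  by (intro real_polynomial_function.intros real_polynomial_function_diff
      real_polynomial_function_power bounded_linear_ident)+

lemma infinity_laplacian_drift_profiles:
  fixes x :: "real^'n::finite"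
  defines "v \<equiv> \<lambda>x. v_profile (x \<bullet> x)" and "F \<equiv> \<lambda>x. F_profile (x \<bullet> x)"
  shows "(\<Sum>i\<in>UNIV. \<Sum>j\<in>UNIV. pderiv i v x * pderiv j v x * pderiv i (pderiv j v) x)
           + (\<Sum>i\<in>UNIV. pderiv i v x * pderiv i F x) = 0"
proof -
  have v': "(v_profile has_real_derivative 2 * u - 2) (at u)" for u
    unfolding v_profile_def by (auto intro!: derivative_eq_intros)
  have v'': "((\<lambda>u. 2 * u - 2) has_real_derivative 2) (at u)" for u
    by (auto intro!: derivative_eq_intros)
  have F': "(F_profile has_real_derivative - 8 * (u - 1)\<^sup>2 - 16 * u * (u - 1)) (at u)" for u
    unfolding F_profile_def
    by (auto intro!: derivative_eq_intros simp: algebra_simps power2_eq_square)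
  show ?thesis
    using infinity_laplacian_drift_radial[OF v' v'' F', of x]
    unfolding v_def F_def by (simp add: algebra_simps power2_eq_square)
qed

theorem mainTheorem3:
  shows "\<exists>(F :: real^'n::finite \<Rightarrow> real) (v :: real^'n \<Rightarrow> real).
     smooth_Rn F \<and> smooth_Rn v \<and>
     (\<forall>x. (\<Sum>i\<in>UNIV. \<Sum>j\<in>UNIV. pderiv i v x * pderiv j v x * pderiv i (pderiv j v) x)
           + (\<Sum>i\<in>UNIV. pderiv i v x * pderiv i F x) = 0) \<and>
     (\<exists>\<Omega>p \<Omega>m :: (real^'n) set.
        open \<Omega>p \<and> bounded \<Omega>p \<and> \<Omega>p \<noteq> {} \<and>
        open \<Omega>m \<and> bounded \<Omega>m \<and> \<Omega>m \<noteq> {} \<and>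
        Sup (v ` \<Omega>p) > Sup (v ` frontier \<Omega>p) \<and>
        Inf (v ` \<Omega>m) < Inf (v ` frontier \<Omega>m))"
proof (intro exI conjI allI)
  show "smooth_Rn (\<lambda>x::real^'n. F_profile (x \<bullet> x))" "smooth_Rn (\<lambda>x::real^'n. v_profile (x \<bullet> x))"
    using real_polynomial_function_profiles
    by (auto intro: smooth_Rn_real_polynomial_function real_polynomial_function_radial)
  show "(\<Sum>i\<in>UNIV. \<Sum>j\<in>UNIV. pderiv i (\<lambda>x. v_profile (x \<bullet> x)) x * pderiv j (\<lambda>x. v_profile (x \<bullet> x)) x
          * pderiv i (pderiv j (\<lambda>x. v_profile (x \<bullet> x))) x)
        + (\<Sum>i\<in>UNIV. pderiv i (\<lambda>x. v_profile (x \<bullet> x)) x * pderiv i (\<lambda>x. F_profile (x \<bullet> x)) x) = 0"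
    for x :: "real^'n"
    by (rule infinity_laplacian_drift_profiles)
  have cont: "continuous_on UNIV v_profile"
    unfolding v_profile_def[abs_def] by (intro continuous_intros)
  show "Sup ((\<lambda>x. v_profile (x \<bullet> x)) ` frontier (ball (0::real^'n) 1))
          < Sup ((\<lambda>x::real^'n. v_profile (x \<bullet> x)) ` ball 0 1)"
    by (rule radial_Sup_frontier_ball_less[OF cont, of 0]) (simp_all add: v_profile_def)
  show "Inf ((\<lambda>x. v_profile (x \<bullet> x)) ` ball (0::real^'n) (sqrt 2))
          < Inf ((\<lambda>x::real^'n. v_profile (x \<bullet> x)) ` frontier (ball 0 (sqrt 2)))"
    by (rule radial_Inf_frontier_ball_greater[OF cont, of 1]) (simp_all add: v_profile_def)
qed (auto simp del: frontier_ball)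

end
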